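(* Let $M\ge 2$, let $\gamma_1,\dots,\gamma_{M-1}$ be nonzero real numbers and $J_1,\dots,J_{M-1}$ real numbers, and consider on the open chain of $M$ sites $$H_{\gamma J}=\sum_{m=1}^{M-1}\Big(J_m c_{m+1}^\dagger c_m\sigma_{m+1}^+ + \text{h.c.}\Big) - \sum_{m=1}^{M-1}\Big(\gamma_m c_{m+1}^\dagger c_m + \text{h.c.}\Big).$$ Let $1\le Q\le M$ be an integer such that $Q$ is even or $M$ is odd. Then the subspace of states with exactly $Q$ fermions and spin on site $1$ equal to $|\uparrow\rangle$ contains at least $2^{M-1}$ linearly independent states $|\Psi\rangle$ with $H_{\gamma J}|\Psi\rangle=0$.
   Context: Each site $m$ carries one spinless fermion mode ($c_m,c_m^\dagger$, canonical anticommutation relations) and one spin-$1/2$ with Pauli matrices $\sigma_m^{x,y,z}$; $\sigma_m^{\pm}=\sigma_m^x\pm i\sigma_m^y$. $H_{\gamma J}$ conserves the total fermion number $Q=\sum_m c_m^\dagger c_m$ and does not act on the spin at site $1$. *)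

theory Defs
  imports Complex_Main
begin

(* Sites are 1..M.  A basis configuration is a pair (n, s): n k = fermion occupation of
   site k, s k = True iff the spin at site k is up. *)
type_synonym cfg = "(nat \<Rightarrow> bool) \<times> (nat \<Rightarrow> bool)"
type_synonym state = "cfg \<Rightarrow> complex"

definition valid_cfg :: "nat \<Rightarrow> cfg \<Rightarrow> bool" where
  "valid_cfg M x \<longleftrightarrow> (\<forall>k. k \<notin> {1..M} \<longrightarrow> \<not> fst x k \<and> \<not> snd x k)"

definition jw_sign :: "(nat \<Rightarrow> bool) \<Rightarrow> nat \<Rightarrow> complex" where
  "jw_sign n m = (-1) ^ card {k. 1 \<le> k \<and> k < m \<and> n k}"

definition c_ann :: "nat \<Rightarrow> state \<Rightarrow> state" where
  "c_ann m \<psi> = (\<lambda>(n, s). if n m then 0 else jw_sign n m * \<psi> (n(m := True), s))"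

definition c_cre :: "nat \<Rightarrow> state \<Rightarrow> state" where
  "c_cre m \<psi> = (\<lambda>(n, s). if n m then jw_sign n m * \<psi> (n(m := False), s) else 0)"

definition sig_x :: "nat \<Rightarrow> state \<Rightarrow> state" where
  "sig_x m \<psi> = (\<lambda>(n, s). \<psi> (n, s(m := \<not> s m)))"

definition sig_y :: "nat \<Rightarrow> state \<Rightarrow> state" where
  "sig_y m \<psi> = (\<lambda>(n, s). (if s m then - \<i> else \<i>) * \<psi> (n, s(m := \<not> s m)))"

definition sig_z :: "nat \<Rightarrow> state \<Rightarrow> state" where
  "sig_z m \<psi> = (\<lambda>(n, s). (if s m then 1 else -1) * \<psi> (n, s))"

definition sig_plus :: "nat \<Rightarrow> state \<Rightarrow> state" where
  "sig_plus m \<psi> = (\<lambda>x. sig_x m \<psi> x + \<i> * sig_y m \<psi> x)"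

definition sig_minus :: "nat \<Rightarrow> state \<Rightarrow> state" where
  "sig_minus m \<psi> = (\<lambda>x. sig_x m \<psi> x - \<i> * sig_y m \<psi> x)"

(* H_{\<gamma>J}; the hermitian conjugates use that \<gamma>, J are real and that
   (c_{m+1}^\<dagger> c_m \<sigma>^+_{m+1})^\<dagger> = \<sigma>^-_{m+1} c_m^\<dagger> c_{m+1} = c_m^\<dagger> c_{m+1} \<sigma>^-_{m+1} *)
definition H_gJ :: "nat \<Rightarrow> (nat \<Rightarrow> real) \<Rightarrow> (nat \<Rightarrow> real) \<Rightarrow> state \<Rightarrow> state" where
  "H_gJ M \<gamma> J \<psi> = (\<lambda>x.
     (\<Sum>m\<in>{1..<M}.
        complex_of_real (J m) * c_cre (m+1) (c_ann m (sig_plus (m+1) \<psi>)) x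
      + complex_of_real (J m) * c_cre m (c_ann (m+1) (sig_minus (m+1) \<psi>)) x)
   - (\<Sum>m\<in>{1..<M}.
        complex_of_real (\<gamma> m) * c_cre (m+1) (c_ann m \<psi>) x
      + complex_of_real (\<gamma> m) * c_cre m (c_ann (m+1) \<psi>) x))"

definition sector :: "nat \<Rightarrow> nat \<Rightarrow> state set" where
  "sector M Q = {\<psi>. \<forall>x. \<psi> x \<noteq> 0 \<longrightarrow>
      valid_cfg M x \<and> card {k\<in>{1..M}. fst x k} = Q \<and> snd x 1}"

definition lin_indep :: "state set \<Rightarrow> bool" where
  "lin_indep B \<longleftrightarrow> finite B \<and>
     (\<forall>u :: state \<Rightarrow> complex. (\<forall>x. (\<Sum>v\<in>B. u v * v x) = 0) \<longrightarrow> (\<forall>v\<in>B. u v = 0))"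

end

theory Submission
  imports Defs "HOL-Library.Function_Algebras"
begin

(* Every term of H_gJ moves one fermion to a neighbouring site, possibly flipping a spin at the
   target site m + 1 >= 2.  Hence H_gJ preserves the fermion number and the spin at site 1 but
   flips the parity of the sum of the occupied positions: it maps the parity-b part of the sector
   into the parity-(not b) part, and by rank-nullity its kernel on the parity-b part has dimension
   at least the difference of the two dimensions.  The spins at sites 2..M are free, giving a
   factor 2^(M-1) in both dimensions, and the difference of the numbers of Q-subsets of {1..M}
   with even and with odd sum is the Gaussian binomial at q = -1 up to sign, which equals
   +-(floor(M/2) choose floor(Q/2)) and is nonzero unless Q is odd and M is even. *)

lemma (in vector_space_pair) rank_nullity_card_bound:
  assumes f: "Vector_Spaces.linear s1 s2 f" and B: "finite B" "vs1.independent B"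
    and C: "finite C" "f ` vs1.span B \<subseteq> vs2.span C"
  obtains K where "K \<subseteq> vs1.span B" "\<forall>v\<in>K. f v = 0" "vs1.independent K"
    "card B \<le> card K + card C"
proof -
  let ?ker = "vs1.span B \<inter> {v. f v = 0}"
  obtain K where K: "K \<subseteq> ?ker" "vs1.independent K" "?ker \<subseteq> vs1.span K"
    by (rule vs1.basis_exists)
  obtain D where D: "D \<subseteq> f ` vs1.span B" "vs2.independent D" "f ` vs1.span B \<subseteq> vs2.span D"
    by (rule vs2.basis_exists)
  have D_bound: "finite D" "card D \<le> card C"
    using vs2.independent_span_bound[OF C(1) D(2)] D(1) C(2) by auto
  \<comment> \<open>Lifting the image basis \<open>D\<close> to \<open>G\<close>, the sets \<open>K\<close> and \<open>G\<close> together span \<open>span B\<close>.\<close>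
  obtain G where G: "G \<subseteq> vs1.span B" "inj_on f G" "D = f ` G"
    using D(1) subset_image_inj by meson
  have K_fin: "finite K"
    using vs1.independent_span_bound[OF B(1) K(2)] K(1) by auto
  have G_fin: "finite G" "card G = card D"
    using G(2,3) D_bound(1) by (auto simp: card_image dest: finite_imageD)
  have "vs1.span B \<subseteq> vs1.span (K \<union> G)"
  proof
    fix v assume v: "v \<in> vs1.span B"
    have "f v \<in> f ` vs1.span G"
      using D(3) G(3) v linear_span_image[OF f] by auto
    then obtain w where w: "w \<in> vs1.span G" "f w = f v" by auto
    have "w \<in> vs1.span B"
      using w(1) G(1) vs1.span_minimal[OF _ vs1.subspace_span] by blast
    then have "v - w \<in> vs1.span K"
      using K(3) v w(2) by (auto simp: linear_diff[OF f] vs1.span_diff)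
    then have "(v - w) + w \<in> vs1.span (K \<union> G)"
      using w(1) by (meson vs1.span_add vs1.span_mono sup_ge1 sup_ge2 subsetD)
    then show "v \<in> vs1.span (K \<union> G)" by simp
  qed
  then have "card B \<le> card (K \<union> G)"
    using vs1.independent_span_bound[of "K \<union> G" B] K_fin G_fin B(2) vs1.span_superset by blast
  also have "\<dots> \<le> card K + card C"
    using card_Un_le[of K G] G_fin D_bound by linarith
  finally show thesis
    using that K(1,2) by blast
qed

definition scale_state :: "complex \<Rightarrow> state \<Rightarrow> state" where
  "scale_state c \<psi> = (\<lambda>x. c * \<psi> x)"

interpretation states: vector_space scale_state
  by unfold_locales (auto simp: scale_state_def fun_eq_iff algebra_simps)

interpretation state_maps: vector_space_pair scale_state scale_state ..

definition states_on :: "cfg set \<Rightarrow> state set" where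
  "states_on S = {\<psi>. \<forall>x. \<psi> x \<noteq> 0 \<longrightarrow> x \<in> S}"

definition basis_state :: "cfg \<Rightarrow> state" where
  "basis_state y = (\<lambda>x. if x = y then 1 else 0)"

lemma sum_fun_apply: "(\<Sum>a\<in>A. f a) x = (\<Sum>a\<in>A. f a x)"
  for f :: "'a \<Rightarrow> 'b \<Rightarrow> 'c::comm_monoid_add"
  by (induction A rule: infinite_finite_induct) auto

lemma inj_basis_state: "inj basis_state"
  unfolding inj_def basis_state_def fun_eq_iff by (metis one_neq_zero)

lemma subspace_states_on: "states.subspace (states_on S)"
  unfolding states.subspace_def states_on_def scale_state_def
  by auto (metis add.right_neutral)

lemma span_basis_states:
  assumes "finite S"
  shows "states.span (basis_state ` S) = states_on S"
proof
  show "states.span (basis_state ` S) \<subseteq> states_on S"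
    by (rule states.span_minimal[OF _ subspace_states_on])
      (auto simp: states_on_def basis_state_def split: if_splits)
  show "states_on S \<subseteq> states.span (basis_state ` S)"
  proof
    fix \<psi> assume "\<psi> \<in> states_on S"
    then have "\<psi> = (\<Sum>y\<in>S. scale_state (\<psi> y) (basis_state y))"
      using assms
      by (auto simp: states_on_def fun_eq_iff sum_fun_apply scale_state_def basis_state_def
          if_distrib cong: if_cong)
    also have "\<dots> \<in> states.span (basis_state ` S)"
      by (intro states.span_sum states.span_scale states.span_base) auto
    finally show "\<psi> \<in> states.span (basis_state ` S)" .
  qed
qed

lemma independent_basis_states: "states.independent (basis_state ` S)"
  unfolding states.independent_explicit_module
proof (intro allI impI)
  fix T u v
  assume T: "finite T" "T \<subseteq> basis_state ` S"
    and sum: "(\<Sum>w\<in>T. scale_state (u w) w) = 0" and v: "v \<in> T"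
  obtain y where y: "v = basis_state y" using T(2) v by auto
  have "w y = 0" if w: "w \<in> T - {v}" for w
  proof -
    obtain z where "w = basis_state z" using w T(2) by auto
    with w y show ?thesis by (auto simp: basis_state_def)
  qed
  then have "(\<Sum>w\<in>T. u w * w y) = u v * v y"
    using sum.remove[OF T(1) v, of "\<lambda>w. u w * w y"] by (simp add: sum.neutral)
  then have "(\<Sum>w\<in>T. u w * w y) = u v"
    using y by (simp add: basis_state_def)
  moreover have "(\<Sum>w\<in>T. u w * w y) = 0"
    using fun_cong[OF sum, of y] by (simp add: sum_fun_apply scale_state_def)
  ultimately show "u v = 0" by simp
qed

lemma independent_imp_lin_indep:
  assumes "finite K" "states.independent K"
  shows "lin_indep K"
  unfolding lin_indep_def
proof (intro conjI allI impI ballI)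
  fix u v assume h: "\<forall>x. (\<Sum>w\<in>K. u w * w x) = 0" and v: "v \<in> K"
  have "(\<Sum>w\<in>K. scale_state (u w) w) = 0"
    using h by (simp add: fun_eq_iff sum_fun_apply scale_state_def)
  then show "u v = 0"
    using states.independentD[OF assms(2,1) order_refl _ v] by blast
qed (fact assms(1))

lemma lin_indep_kernel_card_bound:
  assumes H: "Vector_Spaces.linear scale_state scale_state H"
    and E: "finite E" and F: "finite F" and maps: "H ` states_on E \<subseteq> states_on F"
  obtains K where "K \<subseteq> states_on E" "lin_indep K" "\<forall>\<psi>\<in>K. H \<psi> = (\<lambda>_. 0)"
    "card E \<le> card K + card F"
proof -
  have card_basis: "card (basis_state ` S) = card S" for S
    using card_image[OF inj_on_subset[OF inj_basis_state]] by simp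
  obtain K where K: "K \<subseteq> states_on E" "\<forall>\<psi>\<in>K. H \<psi> = 0" "states.independent K"
      "card E \<le> card K + card F"
    using state_maps.rank_nullity_card_bound[OF H, of "basis_state ` E" "basis_state ` F"]
    by (metis E F maps finite_imageI independent_basis_states span_basis_states card_basis)
  have "finite K"
    using states.independent_span_bound[OF finite_imageI[OF E] K(3)] K(1)
      span_basis_states[OF E] by blast
  with K show thesis
    using that independent_imp_lin_indep by (simp add: zero_fun_def)
qed

lemma site_operators_add:
  "c_ann m (\<phi> + \<psi>) = c_ann m \<phi> + c_ann m \<psi>"
  "c_cre m (\<phi> + \<psi>) = c_cre m \<phi> + c_cre m \<psi>"
  "sig_plus m (\<phi> + \<psi>) = sig_plus m \<phi> + sig_plus m \<psi>"
  "sig_minus m (\<phi> + \<psi>) = sig_minus m \<phi> + sig_minus m \<psi>"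
  by (auto simp: c_ann_def c_cre_def sig_plus_def sig_minus_def sig_x_def sig_y_def fun_eq_iff
      algebra_simps)

lemma site_operators_scale:
  "c_ann m (scale_state a \<psi>) = scale_state a (c_ann m \<psi>)"
  "c_cre m (scale_state a \<psi>) = scale_state a (c_cre m \<psi>)"
  "sig_plus m (scale_state a \<psi>) = scale_state a (sig_plus m \<psi>)"
  "sig_minus m (scale_state a \<psi>) = scale_state a (sig_minus m \<psi>)"
  by (auto simp: c_ann_def c_cre_def sig_plus_def sig_minus_def sig_x_def sig_y_def scale_state_def
      fun_eq_iff algebra_simps)

lemma linear_H_gJ: "Vector_Spaces.linear scale_state scale_state (H_gJ M \<gamma> J)"
  unfolding Vector_Spaces.linear_iff
proof (intro conjI allI states.vector_space_axioms)
  show "H_gJ M \<gamma> J (\<phi> + \<psi>) = H_gJ M \<gamma> J \<phi> + H_gJ M \<gamma> J \<psi>" for \<phi> \<psi>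
    by (simp add: H_gJ_def site_operators_add fun_eq_iff sum.distrib[symmetric] algebra_simps)
  show "H_gJ M \<gamma> J (scale_state a \<psi>) = scale_state a (H_gJ M \<gamma> J \<psi>)" for a \<psi>
    unfolding H_gJ_def site_operators_scale
    by (simp add: fun_eq_iff sum_distrib_left scale_state_def algebra_simps)
qed

definition parity_configs :: "nat \<Rightarrow> nat \<Rightarrow> bool \<Rightarrow> cfg set" where
  "parity_configs M Q b = {x. valid_cfg M x \<and> card {k\<in>{1..M}. fst x k} = Q \<and> snd x 1
      \<and> even (\<Sum>{k\<in>{1..M}. fst x k}) = b}"

lemma states_on_parity_configs_sector: "states_on (parity_configs M Q b) \<subseteq> sector M Q"
  by (auto simp: states_on_def parity_configs_def sector_def)

lemma move_to_neighbour:
  fixes N :: "nat set"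
  assumes "finite N" "a \<in> N" "b \<notin> N" "a = Suc b \<or> b = Suc a"
  shows "card (insert b (N - {a})) = card N"
    and "even (\<Sum>(insert b (N - {a}))) \<longleftrightarrow> odd (\<Sum>N)"
proof -
  have "card N > 0"
    using assms(1,2) card_gt_0_iff by blast
  then show "card (insert b (N - {a})) = card N"
    using assms(1-3) by simp
  have "\<Sum>(insert b (N - {a})) = b + \<Sum>(N - {a})" "\<Sum>N = a + \<Sum>(N - {a})"
    using assms(1-3) by (simp_all add: sum.remove)
  then show "even (\<Sum>(insert b (N - {a}))) \<longleftrightarrow> odd (\<Sum>N)"
    using assms(4) by auto
qed

lemma parity_configs_hop:
  assumes hop: "n a" "\<not> n b" "a \<in> {1..M}" "b \<in> {1..M}" "a = Suc b \<or> b = Suc a"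
    and spin: "c \<noteq> 1" "c \<in> {1..M}" "\<forall>k. k \<noteq> c \<longrightarrow> s' k = s k"
    and target: "(n(a := False, b := True), s') \<in> parity_configs M Q \<beta>"
  shows "(n, s) \<in> parity_configs M Q (\<not> \<beta>)"
proof -
  define N where "N = {k\<in>{1..M}. n k}"
  have N_hop: "{k\<in>{1..M}. (n(a := False, b := True)) k} = insert b (N - {a})"
    using hop unfolding N_def by auto
  have N: "finite N" "a \<in> N" "b \<notin> N"
    using hop unfolding N_def by auto
  have valid': "valid_cfg M (n(a := False, b := True), s')" and "s' 1"
    and card': "card (insert b (N - {a})) = Q" and parity': "even (\<Sum>(insert b (N - {a}))) = \<beta>"
    using target unfolding parity_configs_def mem_Collect_eq fst_conv snd_conv N_hop by auto
  have "valid_cfg M (n, s)"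
    unfolding valid_cfg_def
  proof (intro allI impI)
    fix k assume "k \<notin> {1..M}"
    then show "\<not> fst (n, s) k \<and> \<not> snd (n, s) k"
      using valid' hop(3,4) spin(2,3) unfolding valid_cfg_def
      by (metis fst_conv fun_upd_other snd_conv)
  qed
  moreover have "s 1"
    using \<open>s' 1\<close> spin(1,3) by simp
  moreover have "card N = Q" "even (\<Sum>N) = (\<not> \<beta>)"
    using card' parity' move_to_neighbour[OF N hop(5)] by auto
  ultimately show ?thesis
    unfolding parity_configs_def N_def by simp
qed

lemma hop_terms_vanish:
  assumes "a \<noteq> b"
    and zero: "\<And>s'. n a \<Longrightarrow> \<not> n b \<Longrightarrow> \<forall>k. k \<noteq> c \<longrightarrow> s' k = s k \<Longrightarrow>
      \<psi> (n(a := False, b := True), s') = 0"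
  shows "c_cre a (c_ann b \<psi>) (n, s) = 0"
    and "c_cre a (c_ann b (sig_plus c \<psi>)) (n, s) = 0"
    and "c_cre a (c_ann b (sig_minus c \<psi>)) (n, s) = 0"
proof -
  have "n a \<Longrightarrow> \<not> n b \<Longrightarrow> \<psi> (n(a := False, b := True), s) = 0"
    "n a \<Longrightarrow> \<not> n b \<Longrightarrow> \<psi> (n(a := False, b := True), s(c := \<not> s c)) = 0"
    using zero[of s] zero[of "s(c := \<not> s c)"] by simp_all
  with assms(1) show "c_cre a (c_ann b \<psi>) (n, s) = 0"
    and "c_cre a (c_ann b (sig_plus c \<psi>)) (n, s) = 0"
    and "c_cre a (c_ann b (sig_minus c \<psi>)) (n, s) = 0"
    by (auto simp: c_cre_def c_ann_def sig_plus_def sig_minus_def sig_x_def sig_y_def)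
qed

lemma hop_terms_vanish_off_parity:
  assumes supp: "\<psi> \<in> states_on (parity_configs M Q \<beta>)"
    and out: "(n, s) \<notin> parity_configs M Q (\<not> \<beta>)" and m: "m \<in> {1..<M}"
  shows "c_cre (m + 1) (c_ann m \<psi>) (n, s) = 0 \<and> c_cre m (c_ann (m + 1) \<psi>) (n, s) = 0
    \<and> c_cre (m + 1) (c_ann m (sig_plus (m + 1) \<psi>)) (n, s) = 0
    \<and> c_cre m (c_ann (m + 1) (sig_minus (m + 1) \<psi>)) (n, s) = 0"
proof -
  have zero: "\<psi> (n(a := False, b := True), s') = 0"
    if "n a" "\<not> n b" "a \<in> {1..M}" "b \<in> {1..M}" "a = Suc b \<or> b = Suc a"
      "\<forall>k. k \<noteq> m + 1 \<longrightarrow> s' k = s k" for a b s'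
    using parity_configs_hop[OF that(1-5) _ _ that(6)] m supp out by (auto simp: states_on_def)
  have ne: "m + 1 \<noteq> m" "m \<noteq> m + 1"
    by simp_all
  have "\<psi> (n(m + 1 := False, m := True), s') = 0"
    if "n (m + 1)" "\<not> n m" "\<forall>k. k \<noteq> m + 1 \<longrightarrow> s' k = s k" for s'
    by (rule zero) (use m that in auto)
  note left = hop_terms_vanish[of "m + 1" m n "m + 1" s \<psi>, OF ne(1) this]
  have "\<psi> (n(m := False, m + 1 := True), s') = 0"
    if "n m" "\<not> n (m + 1)" "\<forall>k. k \<noteq> m + 1 \<longrightarrow> s' k = s k" for s'
    by (rule zero) (use m that in auto)
  note right = hop_terms_vanish[of m "m + 1" n "m + 1" s \<psi>, OF ne(2) this]
  show ?thesis
    using left right by blast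
qed

lemma H_gJ_flips_parity:
  "H_gJ M \<gamma> J ` states_on (parity_configs M Q \<beta>) \<subseteq> states_on (parity_configs M Q (\<not> \<beta>))"
proof
  fix \<phi> assume "\<phi> \<in> H_gJ M \<gamma> J ` states_on (parity_configs M Q \<beta>)"
  then obtain \<psi> where \<psi>: "\<psi> \<in> states_on (parity_configs M Q \<beta>)" and \<phi>: "\<phi> = H_gJ M \<gamma> J \<psi>"
    by blast
  have "H_gJ M \<gamma> J \<psi> (n, s) = 0" if "(n, s) \<notin> parity_configs M Q (\<not> \<beta>)" for n s
    using hop_terms_vanish_off_parity[OF \<psi> that] by (simp add: H_gJ_def)
  then show "\<phi> \<in> states_on (parity_configs M Q (\<not> \<beta>))"
    unfolding states_on_def \<phi> by auto
qed

definition site_subsets :: "nat \<Rightarrow> nat \<Rightarrow> nat set set" where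
  "site_subsets M Q = {T. T \<subseteq> {1..M} \<and> card T = Q}"

definition signed_subset_sum :: "nat \<Rightarrow> nat \<Rightarrow> int" where
  "signed_subset_sum M Q = (\<Sum>T\<in>site_subsets M Q. (-1) ^ \<Sum>T)"

(* The sum of q ^ (\<Sum>T) over site_subsets M Q is q ^ (Q(Q+1)/2) times the Gaussian binomial
   [M, Q]_q; signed_binomial M Q is its value at q = -1. *)
definition signed_binomial :: "nat \<Rightarrow> nat \<Rightarrow> int" where
  "signed_binomial M Q =
     (if even M \<and> odd Q then 0 else (-1) ^ ((Q + 1) div 2) * int (M div 2 choose Q div 2))"

lemma finite_site_subsets: "finite (site_subsets M Q)"
  by (rule finite_subset[of _ "Pow {1..M}"]) (auto simp: site_subsets_def)

lemma site_subsets_Suc: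
  "site_subsets (Suc M) (Suc Q) = site_subsets M (Suc Q) \<union> insert (Suc M) ` site_subsets M Q"
proof (rule set_eqI)
  fix T
  have fresh: "Suc M \<notin> C" if "C \<in> site_subsets M Q" for C
    using that by (auto simp: site_subsets_def)
  have "T \<in> site_subsets (Suc M) (Suc Q) \<longleftrightarrow>
      T \<in> site_subsets M (Suc Q) \<or> Suc M \<in> T \<and> T - {Suc M} \<in> site_subsets M Q"
  proof (cases "Suc M \<in> T")
    case True
    then have "T \<subseteq> {1..Suc M} \<longleftrightarrow> T - {Suc M} \<subseteq> {1..M}"
      by (auto simp: atLeastAtMostSuc_conv)
    moreover have "finite T \<Longrightarrow> card T = Suc Q \<longleftrightarrow> card (T - {Suc M}) = Q"
      using True card_Suc_Diff1[of T "Suc M"] by auto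
    ultimately show ?thesis
      using True finite_subset[of T "{1..Suc M}"] finite_subset[of "T - {Suc M}" "{1..M}"]
      by (auto simp: site_subsets_def)
  next
    case False
    then show ?thesis by (auto simp: site_subsets_def atLeastAtMostSuc_conv subset_insert)
  qed
  then show "T \<in> site_subsets (Suc M) (Suc Q) \<longleftrightarrow>
      T \<in> site_subsets M (Suc Q) \<union> insert (Suc M) ` site_subsets M Q"
    using in_image_insert_iff[OF fresh] by blast
qed

lemma signed_subset_sum_Suc:
  "signed_subset_sum (Suc M) (Suc Q) =
     signed_subset_sum M (Suc Q) + (-1) ^ Suc M * signed_subset_sum M Q"
proof -
  have fresh: "Suc M \<notin> T" if "T \<in> site_subsets M Q" for T
    using that by (auto simp: site_subsets_def)
  have "inj_on (insert (Suc M)) (site_subsets M Q)"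
    using fresh by (metis inj_onI insert_ident)
  moreover have "site_subsets M (Suc Q) \<inter> insert (Suc M) ` site_subsets M Q = {}"
    by (auto simp: site_subsets_def)
  ultimately have "signed_subset_sum (Suc M) (Suc Q)
      = signed_subset_sum M (Suc Q) + (\<Sum>T\<in>site_subsets M Q. (-1) ^ \<Sum>(insert (Suc M) T))"
    unfolding signed_subset_sum_def site_subsets_Suc
    by (simp add: sum.union_disjoint finite_site_subsets sum.reindex)
  also have "(\<Sum>T\<in>site_subsets M Q. (-1::int) ^ \<Sum>(insert (Suc M) T))
      = (\<Sum>T\<in>site_subsets M Q. (-1) ^ Suc M * (-1) ^ \<Sum>T)"
  proof (rule sum.cong[OF refl])
    fix T assume "T \<in> site_subsets M Q"
    then have "finite T" "Suc M \<notin> T"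
      using fresh finite_subset by (auto simp: site_subsets_def)
    then show "(-1::int) ^ \<Sum>(insert (Suc M) T) = (-1) ^ Suc M * (-1) ^ \<Sum>T"
      by (simp add: power_add)
  qed
  finally show ?thesis
    by (simp add: signed_subset_sum_def sum_distrib_left)
qed

lemma signed_subset_sum_0: "signed_subset_sum M 0 = 1"
proof -
  have "site_subsets M 0 = {{}}"
    by (auto simp: site_subsets_def dest: finite_subset[OF _ finite_atLeastAtMost])
  then show ?thesis
    by (simp add: signed_subset_sum_def)
qed

lemma signed_subset_sum_0_Suc: "signed_subset_sum 0 (Suc Q) = 0"
  by (simp add: signed_subset_sum_def site_subsets_def)

lemma signed_binomial_Suc:
  "signed_binomial (Suc M) (Suc Q) = signed_binomial M (Suc Q) + (-1) ^ Suc M * signed_binomial M Q"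
proof -
  obtain k where "M = 2 * k \<or> M = 2 * k + 1"
    by (metis even_two_times_div_two odd_two_times_div_two_succ)
  moreover obtain j where "Q = 2 * j \<or> Q = 2 * j + 1"
    by (metis even_two_times_div_two odd_two_times_div_two_succ)
  ultimately show ?thesis
    by (elim disjE) (simp_all add: signed_binomial_def algebra_simps)
qed

lemma signed_subset_sum_eq_signed_binomial: "signed_subset_sum M Q = signed_binomial M Q"
proof (induction M arbitrary: Q)
  case 0
  then show ?case
    by (cases Q) (simp_all add: signed_subset_sum_0 signed_subset_sum_0_Suc signed_binomial_def)
next
  case (Suc M)
  then show ?case
    by (cases Q) (simp_all add: signed_subset_sum_0 signed_binomial_def[of _ 0]
        signed_subset_sum_Suc signed_binomial_Suc)
qed

lemma signed_binomial_nonzero: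
  assumes "Q \<le> M" and "even Q \<or> odd M"
  shows "signed_binomial M Q \<noteq> 0"
  using assms div_le_mono[OF assms(1), of 2] by (auto simp: signed_binomial_def)

definition parity_subsets :: "nat \<Rightarrow> nat \<Rightarrow> bool \<Rightarrow> nat set set" where
  "parity_subsets M Q b = {T \<in> site_subsets M Q. even (\<Sum>T) = b}"

definition spin_up_sets :: "nat \<Rightarrow> nat set set" where
  "spin_up_sets M = {U. U \<subseteq> {1..M} \<and> 1 \<in> U}"

definition cfg_of :: "nat set \<times> nat set \<Rightarrow> cfg" where
  "cfg_of = (\<lambda>(T, U). ((\<lambda>k. k \<in> T), (\<lambda>k. k \<in> U)))"

lemma signed_subset_sum_parity:
  "signed_subset_sum M Q =
     int (card (parity_subsets M Q True)) - int (card (parity_subsets M Q False))"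
proof -
  have split: "site_subsets M Q = parity_subsets M Q True \<union> parity_subsets M Q False"
    "parity_subsets M Q True \<inter> parity_subsets M Q False = {}"
    by (auto simp: parity_subsets_def)
  have "finite (parity_subsets M Q b)" for b
    using finite_site_subsets by (simp add: parity_subsets_def)
  then have "signed_subset_sum M Q
      = (\<Sum>T\<in>parity_subsets M Q True. (-1) ^ \<Sum>T) + (\<Sum>T\<in>parity_subsets M Q False. (-1) ^ \<Sum>T)"
    unfolding signed_subset_sum_def split(1) by (simp add: sum.union_disjoint split(2))
  also have "\<dots> = (\<Sum>T\<in>parity_subsets M Q True. 1) + (\<Sum>T\<in>parity_subsets M Q False. -1)"
    by (intro arg_cong2[where f = "(+)"] sum.cong) (auto simp: parity_subsets_def)
  finally show ?thesis
    by simp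
qed

lemma inj_cfg_of: "inj cfg_of"
  by (auto simp: inj_def cfg_of_def fun_eq_iff)

lemma parity_configs_eq_image:
  "parity_configs M Q b = cfg_of ` (parity_subsets M Q b \<times> spin_up_sets M)"
proof (rule set_eqI)
  fix x :: cfg
  obtain n s where x: "x = (n, s)" by fastforce
  have x_cfg: "x = cfg_of ({k. n k}, {k. s k})"
    by (simp add: x cfg_of_def)
  have "x \<in> parity_configs M Q b \<longleftrightarrow> ({k. n k}, {k. s k}) \<in> parity_subsets M Q b \<times> spin_up_sets M"
  proof -
    have "valid_cfg M x \<longleftrightarrow> {k. n k} \<subseteq> {1..M} \<and> {k. s k} \<subseteq> {1..M}"
      by (auto simp: valid_cfg_def x)
    moreover have "{k\<in>{1..M}. n k} = {k. n k}" if "{k. n k} \<subseteq> {1..M}"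
      using that by auto
    ultimately show ?thesis
      by (auto simp: parity_configs_def parity_subsets_def site_subsets_def spin_up_sets_def x)
  qed
  then show "x \<in> parity_configs M Q b \<longleftrightarrow> x \<in> cfg_of ` (parity_subsets M Q b \<times> spin_up_sets M)"
    by (subst (2) x_cfg) (simp only: inj_image_mem_iff[OF inj_cfg_of])
qed

lemma card_spin_up_sets:
  assumes "1 \<le> M"
  shows "card (spin_up_sets M) = 2 ^ (M - 1)"
proof -
  have fresh: "1 \<notin> U" if "U \<in> Pow {2..M}" for U :: "nat set"
    using that by auto
  have "U \<in> spin_up_sets M \<longleftrightarrow> U \<in> insert 1 ` Pow {2..M}" for U
  proof -
    have "U \<subseteq> {1..M} \<longleftrightarrow> U - {1} \<subseteq> {2..M}" if "1 \<in> U"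
      using that assms by auto
    then show ?thesis
      using in_image_insert_iff[where B = "Pow {2..M}", OF fresh] by (auto simp: spin_up_sets_def)
  qed
  then have "spin_up_sets M = insert 1 ` Pow {2..M}"
    by (rule set_eqI)
  moreover have "inj_on (insert 1) (Pow {2..M})"
    using fresh by (metis inj_onI insert_ident)
  ultimately show ?thesis
    by (simp add: card_image card_Pow)
qed

lemma finite_parity_configs: "finite (parity_configs M Q b)"
proof -
  have "finite (spin_up_sets M)"
    by (rule finite_subset[of _ "Pow {1..M}"]) (auto simp: spin_up_sets_def)
  then show ?thesis
    using finite_site_subsets by (simp add: parity_configs_eq_image parity_subsets_def)
qed

lemma card_parity_configs:
  assumes "1 \<le> M"
  shows "card (parity_configs M Q b) = card (parity_subsets M Q b) * 2 ^ (M - 1)"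
  unfolding parity_configs_eq_image
  using card_image[OF inj_on_subset[OF inj_cfg_of subset_UNIV]] card_spin_up_sets[OF assms]
  by (simp add: card_cartesian_product)

lemma parity_configs_surplus:
  assumes "1 \<le> M" and "Q \<le> M" and "even Q \<or> odd M"
  obtains \<beta> where "card (parity_configs M Q (\<not> \<beta>)) + 2 ^ (M - 1) \<le> card (parity_configs M Q \<beta>)"
proof -
  have "card (parity_subsets M Q True) \<noteq> card (parity_subsets M Q False)"
    using signed_binomial_nonzero[OF assms(2,3)]
    by (simp add: signed_subset_sum_parity flip: signed_subset_sum_eq_signed_binomial)
  then obtain \<beta> where "card (parity_subsets M Q (\<not> \<beta>)) + 1 \<le> card (parity_subsets M Q \<beta>)"
    by (metis (full_types) Suc_eq_plus1 Suc_leI linorder_neqE_nat)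
  then have "(card (parity_subsets M Q (\<not> \<beta>)) + 1) * 2 ^ (M - 1)
      \<le> card (parity_subsets M Q \<beta>) * 2 ^ (M - 1)"
    by (rule mult_right_mono) simp
  then show thesis
    using that card_parity_configs[OF assms(1)] by (simp add: algebra_simps)
qed

theorem mainTheorem5:
  fixes M Q :: nat and \<gamma> J :: "nat \<Rightarrow> real"
  assumes "M \<ge> 2"
    and "\<forall>m\<in>{1..<M}. \<gamma> m \<noteq> 0"
    and "1 \<le> Q" and "Q \<le> M"
    and "even Q \<or> odd M"
  shows "\<exists>B. B \<subseteq> sector M Q \<and> lin_indep B \<and> card B \<ge> 2 ^ (M - 1)
             \<and> (\<forall>\<psi>\<in>B. H_gJ M \<gamma> J \<psi> = (\<lambda>_. 0))"
proof -
  obtain \<beta> where surplus: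
    "card (parity_configs M Q (\<not> \<beta>)) + 2 ^ (M - 1) \<le> card (parity_configs M Q \<beta>)"
    using parity_configs_surplus[of M Q] assms(1,4,5) by fastforce
  obtain K where K: "K \<subseteq> states_on (parity_configs M Q \<beta>)" "lin_indep K"
      "\<forall>\<psi>\<in>K. H_gJ M \<gamma> J \<psi> = (\<lambda>_. 0)"
      "card (parity_configs M Q \<beta>) \<le> card K + card (parity_configs M Q (\<not> \<beta>))"
    by (rule lin_indep_kernel_card_bound[OF linear_H_gJ finite_parity_configs finite_parity_configs
          H_gJ_flips_parity])
  show ?thesis
  proof (intro exI conjI)
    show "K \<subseteq> sector M Q"
      using K(1) states_on_parity_configs_sector by blast
    show "2 ^ (M - 1) \<le> card K"
      using K(4) surplus by linarith
  qed (fact K(2,3))+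
qed

end
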